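(* Let $z=(L,\xi)\in Z$ with $L>0$ and assume there are a direction $u\in\mathbb R^2$ and $c>0$ such that $\xi_\tau^Tu\ge c$ almost everywhere on $]0,1[$. Then the derivative $h'(z):\delta Z\to L^\infty(]0,1[)$, $h'(z)[\delta L,\delta\xi]=2\xi_\tau^T\delta\xi_\tau-2L\,\delta L$, is surjective, i.e. $z$ is a regular point.
   Context: $X=\{\xi\in W^{1,\infty}(]0,1[,\mathbb R^2):\xi(0)=x_O,\xi(1)=x_D\}$ for fixed points $x_O,x_D\in\mathbb R^2$; $\delta X=W^{1,\infty}_0(]0,1[,\mathbb R^2)$; $\xi_\tau$ denotes the derivative of $\xi$. $Z=\mathbb R\times X$, $\delta Z=\mathbb R\times\delta X$, and $h:Z\to L^\infty(]0,1[)$, $h(L,\xi)=\xi_\tau^T\xi_\tau-L^2$. *)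

theory Defs
  imports "HOL-Analysis.Analysis"
begin

definition Linf01 :: "(real \<Rightarrow> 'a::euclidean_space) \<Rightarrow> bool" where
  "Linf01 f \<longleftrightarrow> f \<in> borel_measurable (restrict_space lebesgue {0<..<1}) \<and>
     (\<exists>B. AE t in lebesgue. t \<in> {0<..<1} \<longrightarrow> norm (f t) \<le> B)"

definition test_fun01 :: "(real \<Rightarrow> real) \<Rightarrow> bool" where
  "test_fun01 \<phi> \<longleftrightarrow> \<phi> C1_differentiable_on UNIV \<and>
     (\<exists>a b. 0 < a \<and> a \<le> b \<and> b < 1 \<and> (\<forall>t. t \<notin> {a..b} \<longrightarrow> \<phi> t = 0))"

definition weak_deriv01 :: "(real \<Rightarrow> 'a::euclidean_space) \<Rightarrow> (real \<Rightarrow> 'a) \<Rightarrow> bool" where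
  "weak_deriv01 x v \<longleftrightarrow> (\<forall>\<phi>. test_fun01 \<phi> \<longrightarrow>
     integral {0..1} (\<lambda>t. vector_derivative \<phi> (at t) *\<^sub>R x t)
       = - integral {0..1} (\<lambda>t. \<phi> t *\<^sub>R v t))"

text \<open>x belongs to W^{1,infinity}(]0,1[) (represented by its continuous representative on [0,1])
  and v is its (weak) derivative x_tau, an L-infinity function.\<close>
definition W1inf01 :: "(real \<Rightarrow> 'a::euclidean_space) \<Rightarrow> (real \<Rightarrow> 'a) \<Rightarrow> bool" where
  "W1inf01 x v \<longleftrightarrow> continuous_on {0..1} x \<and> Linf01 v \<and> weak_deriv01 x v"

definition h_deriv :: "real \<Rightarrow> (real \<Rightarrow> real^2) \<Rightarrow> real \<Rightarrow> (real \<Rightarrow> real^2) \<Rightarrow> real \<Rightarrow> real" where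
  "h_deriv L \<xi>' dL d\<xi>' t = 2 * (\<xi>' t \<bullet> d\<xi>' t) - 2 * L * dL"

end

theory Submission
  imports Defs
begin

(* Look for the variation among curves with velocity dxi_tau = w u for a scalar function w.
   With a = xi_tau^T u >= c, the equation h'(z)[dL, dxi] = g becomes 2 a w - 2 L dL = g, so
   w = (g + 2 L dL) / (2 a) is essentially bounded. The boundary conditions dxi(0) = dxi(1) = 0
   amount to the single linear condition int_0^1 w = 0 on dL, which can be met because
   int_0^1 1/a > 0. That dxi(t) = (int_0^t w) u has weak derivative w u is Fubini's theorem. *)

lemma set_integrable_bounded_Icc:
  fixes f :: "real \<Rightarrow> real"
  assumes "f \<in> borel_measurable borel" and "\<And>t. t \<in> {a..b} \<Longrightarrow> \<bar>f t\<bar> \<le> K"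
  shows "set_integrable lborel {a..b} f"
  unfolding set_integrable_def using assms
  by (intro integrableI_bounded_set[where A="{a..b}" and B=K])
     (auto simp: indicator_def emeasure_lborel_Icc_eq)

lemma integrable_on_bounded_Icc:
  fixes f :: "real \<Rightarrow> real"
  assumes "f \<in> borel_measurable borel" and "\<And>t. t \<in> {a..b} \<Longrightarrow> \<bar>f t\<bar> \<le> K"
  shows "f integrable_on {a..b}"
  using set_integrable_bounded_Icc[OF assms] by (rule set_borel_integral_eq_integral(1))

lemma integral_scaleR_left_unconditional:
  fixes f :: "'a::euclidean_space \<Rightarrow> real" and c :: "'b::euclidean_space"
  shows "integral S (\<lambda>x. f x *\<^sub>R c) = integral S f *\<^sub>R c"
proof (cases "f integrable_on S \<or> c = 0")
  case True
  then show ?thesis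
    by (auto intro: integral_unique has_integral_scaleR_left integrable_integral)
next
  case False
  have "f = (\<lambda>x. (f x *\<^sub>R c) \<bullet> c / (c \<bullet> c))"
    using False by auto
  then have "\<not> (\<lambda>x. f x *\<^sub>R c) integrable_on S"
    using False integrable_linear[of "\<lambda>x. f x *\<^sub>R c" S "\<lambda>y. y \<bullet> c / (c \<bullet> c)"]
      bounded_linear_compose[OF bounded_linear_divide bounded_linear_inner_left]
    by (auto simp: o_def)
  with False show ?thesis by (simp add: not_integrable_integral)
qed

lemma lborel_integral_indicator_Icc:
  fixes f :: "real \<Rightarrow> real"
  assumes "f \<in> borel_measurable borel" and "\<And>t. t \<in> {a..b} \<Longrightarrow> \<bar>f t\<bar> \<le> K"
  shows "(\<integral>t. indicator {a..b} t * f t \<partial>lborel) = integral {a..b} f"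
  using set_borel_integral_eq_integral(2)[OF set_integrable_bounded_Icc[OF assms]]
  by (simp add: set_lebesgue_integral_def)

lemma integral_eq_lborel_integral_indicator:
  fixes g :: "real \<Rightarrow> real"
  assumes "integrable lborel (\<lambda>t. indicator S t * g t)"
  shows "integral S g = (\<integral>t. indicator S t * g t \<partial>lborel)"
  using set_borel_integral_eq_integral(2)[of S g] assms
  by (simp add: set_integrable_def set_lebesgue_integral_def)

lemma integral_mult_indefinite_integral_swap:
  fixes f w :: "real \<Rightarrow> real"
  assumes f_meas[measurable]: "f \<in> borel_measurable borel"
    and f_bound: "\<And>t. t \<in> {a..b} \<Longrightarrow> \<bar>f t\<bar> \<le> Kf"
    and w_meas[measurable]: "w \<in> borel_measurable borel"
    and w_bound: "\<And>t. t \<in> {a..b} \<Longrightarrow> \<bar>w t\<bar> \<le> Kw"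
  shows "integral {a..b} (\<lambda>t. f t * integral {a..t} w)
    = integral {a..b} (\<lambda>s. w s * integral {s..b} f)"
proof -
  define F where "F t s = (if a \<le> s \<and> s \<le> t \<and> t \<le> b then f t * w s else 0)" for t s
  have F_int: "integrable (lborel \<Otimes>\<^sub>M lborel) (case_prod F)"
  proof (rule integrableI_bounded_set[where A="{a..b} \<times> {a..b}" and B="\<bar>Kf\<bar> * \<bar>Kw\<bar>"])
    show "case_prod F \<in> borel_measurable (lborel \<Otimes>\<^sub>M lborel)"
      unfolding F_def by measurable
  qed (auto simp: F_def abs_mult lborel.emeasure_pair_measure_Times ennreal_mult_less_top
      emeasure_lborel_Icc_eq split: if_splits
      intro!: AE_I2 mult_mono order_trans[OF f_bound] order_trans[OF w_bound])
  have inner_s: "(\<integral>s. F t s \<partial>lborel) = indicator {a..b} t * (f t * integral {a..t} w)"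
    for t
  proof -
    have "(\<lambda>s. F t s) = (\<lambda>s. indicator {a..b} t * f t * (indicator {a..t} s * w s))"
      by (auto simp: F_def indicator_def)
    then show ?thesis
      using lborel_integral_indicator_Icc[OF w_meas, of a t Kw] w_bound
      by (cases "t \<in> {a..b}") auto
  qed
  have inner_t: "(\<integral>t. F t s \<partial>lborel) = indicator {a..b} s * (w s * integral {s..b} f)"
    for s
  proof -
    have "(\<lambda>t. F t s) = (\<lambda>t. indicator {a..b} s * w s * (indicator {s..b} t * f t))"
      by (auto simp: F_def indicator_def)
    then show ?thesis
      using lborel_integral_indicator_Icc[OF f_meas, of s b Kf] f_bound
      by (cases "s \<in> {a..b}") auto
  qed
  have "integral {a..b} (\<lambda>t. f t * integral {a..t} w)
      = (\<integral>t. (\<integral>s. F t s \<partial>lborel) \<partial>lborel)"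
    using lborel_pair.integrable_fst'[OF F_int]
    by (simp add: inner_s integral_eq_lborel_integral_indicator)
  also have "\<dots> = (\<integral>s. (\<integral>t. F t s \<partial>lborel) \<partial>lborel)"
    using lborel_pair.Fubini_integral[of F] F_int by simp
  also have "\<dots> = integral {a..b} (\<lambda>s. w s * integral {s..b} f)"
    using lborel_pair.integrable_fst'[OF lborel_pair.integrable_product_swap[OF F_int]]
    by (simp add: inner_t integral_eq_lborel_integral_indicator)
  finally show ?thesis .
qed

lemma AE_bounded_borel_representative:
  fixes f :: "'a::euclidean_space \<Rightarrow> real"
  assumes "f \<in> borel_measurable (restrict_space lebesgue S)" and "S \<in> sets lebesgue"
    and "lo \<le> hi" and "AE t in lebesgue. t \<in> S \<longrightarrow> lo \<le> f t \<and> f t \<le> hi"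
  obtains f' where "f' \<in> borel_measurable borel" and "\<And>t. lo \<le> f' t \<and> f' t \<le> hi"
    and "AE t in lebesgue. t \<in> S \<longrightarrow> f' t = f t"
proof -
  have "(\<lambda>t. if t \<in> S then f t else 0) \<in> borel_measurable lebesgue"
    using assms(1,2) measurable_restrict_space_iff[of S lebesgue 0 borel f] by simp
  then obtain g where g: "g \<in> borel_measurable lborel"
    and "AE t in lborel. (if t \<in> S then f t else 0) = g t"
    using completion_ex_borel_measurable_real by blast
  then have "AE t in lebesgue. t \<in> S \<longrightarrow> f t = g t"
    by (auto dest: AE_completion elim: AE_mp)
  show ?thesis
  proof
    show "(\<lambda>t. max lo (min hi (g t))) \<in> borel_measurable borel"
      using g by simp
    show "lo \<le> max lo (min hi (g t)) \<and> max lo (min hi (g t)) \<le> hi" for t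
      using assms(3) by auto
    show "AE t in lebesgue. t \<in> S \<longrightarrow> max lo (min hi (g t)) = f t"
      using \<open>AE t in lebesgue. t \<in> S \<longrightarrow> f t = g t\<close> assms(4) by eventually_elim auto
  qed
qed

lemma Linf01E:
  assumes "Linf01 f"
  obtains B where "f \<in> borel_measurable (restrict_space lebesgue {0<..<1})"
    and "AE t in lebesgue. t \<in> {0<..<1} \<longrightarrow> norm (f t) \<le> B"
  using assms unfolding Linf01_def by blast

lemma Linf01_bounded_borel:
  fixes w :: "real \<Rightarrow> 'a::euclidean_space"
  assumes "w \<in> borel_measurable borel" and "\<And>t. t \<in> {0<..<1} \<Longrightarrow> norm (w t) \<le> K"
  shows "Linf01 w"
  unfolding Linf01_def
proof
  have "w \<in> borel_measurable lebesgue"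
    using assms(1) by (intro measurable_completion) simp
  then show "w \<in> borel_measurable (restrict_space lebesgue {0<..<1})"
    by (rule measurable_restrict_space1)
  show "\<exists>B. AE t in lebesgue. t \<in> {0<..<1} \<longrightarrow> norm (w t) \<le> B"
    using assms(2) by blast
qed

lemma Linf01_scaleR:
  fixes v :: "real \<Rightarrow> real"
  assumes "Linf01 v"
  shows "Linf01 (\<lambda>t. v t *\<^sub>R u)"
proof -
  obtain B where meas: "v \<in> borel_measurable (restrict_space lebesgue {0<..<1})"
    and bound: "AE t in lebesgue. t \<in> {0<..<1} \<longrightarrow> norm (v t) \<le> B"
    using assms by (rule Linf01E)
  have "AE t in lebesgue. t \<in> {0<..<1} \<longrightarrow> norm (v t *\<^sub>R u) \<le> B * norm u"
    using bound by eventually_elim (auto intro: mult_right_mono)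
  with meas show ?thesis
    unfolding Linf01_def by (intro conjI exI borel_measurable_scaleR) auto
qed

lemma Linf01_inner_right:
  assumes "Linf01 v"
  shows "Linf01 (\<lambda>t. v t \<bullet> u)"
proof -
  obtain B where meas: "v \<in> borel_measurable (restrict_space lebesgue {0<..<1})"
    and bound: "AE t in lebesgue. t \<in> {0<..<1} \<longrightarrow> norm (v t) \<le> B"
    using assms by (rule Linf01E)
  have "AE t in lebesgue. t \<in> {0<..<1} \<longrightarrow> norm (v t \<bullet> u) \<le> B * norm u"
    using bound by eventually_elim
      (auto intro!: order_trans[OF Cauchy_Schwarz_ineq2] mult_right_mono)
  with meas show ?thesis
    unfolding Linf01_def by (intro conjI exI borel_measurable_inner) auto
qed

lemma Linf01_divide:
  fixes f a :: "real \<Rightarrow> real"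
  assumes "Linf01 f" and "Linf01 a" and "c > 0"
    and a_ge: "AE t in lebesgue. t \<in> {0<..<1} \<longrightarrow> c \<le> a t"
  shows "Linf01 (\<lambda>t. f t / a t)"
proof -
  obtain Bf where f_meas: "f \<in> borel_measurable (restrict_space lebesgue {0<..<1})"
    and f_le: "AE t in lebesgue. t \<in> {0<..<1} \<longrightarrow> norm (f t) \<le> Bf"
    using \<open>Linf01 f\<close> by (rule Linf01E)
  have a_meas: "a \<in> borel_measurable (restrict_space lebesgue {0<..<1})"
    using \<open>Linf01 a\<close> unfolding Linf01_def by blast
  have "(\<lambda>t. f t / a t) \<in> borel_measurable (restrict_space lebesgue {0<..<1})"
    using f_meas a_meas by measurable
  moreover have "AE t in lebesgue. t \<in> {0<..<1} \<longrightarrow> norm (f t / a t) \<le> \<bar>Bf\<bar> / c"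
    using a_ge f_le
    by eventually_elim (use \<open>c > 0\<close> in \<open>auto simp: abs_divide intro!: frac_le\<close>)
  ultimately show ?thesis
    unfolding Linf01_def by blast
qed

lemma Linf01_bounded_representative:
  fixes f :: "real \<Rightarrow> real"
  assumes "Linf01 f"
  obtains f' K where "f' \<in> borel_measurable borel" and "\<And>t. \<bar>f' t\<bar> \<le> K"
    and "AE t in lebesgue. t \<in> {0<..<1} \<longrightarrow> f' t = f t"
proof -
  obtain B where meas: "f \<in> borel_measurable (restrict_space lebesgue {0<..<1})"
    and bound: "AE t in lebesgue. t \<in> {0<..<1} \<longrightarrow> norm (f t) \<le> B"
    using assms by (rule Linf01E)
  obtain f' where "f' \<in> borel_measurable borel"
    and f'_bounds: "\<And>t. - \<bar>B\<bar> \<le> f' t \<and> f' t \<le> \<bar>B\<bar>"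
    and "AE t in lebesgue. t \<in> {0<..<1} \<longrightarrow> f' t = f t"
  proof (rule AE_bounded_borel_representative[OF meas])
    show "AE t in lebesgue. t \<in> {0<..<1} \<longrightarrow> - \<bar>B\<bar> \<le> f t \<and> f t \<le> \<bar>B\<bar>"
      using bound by eventually_elim auto
  qed auto
  moreover have "\<bar>f' t\<bar> \<le> \<bar>B\<bar>" for t
    using f'_bounds[of t] by linarith
  ultimately show thesis
    using that by blast
qed

lemma Linf01_reciprocal_representative:
  fixes a :: "real \<Rightarrow> real"
  assumes "Linf01 a" and "c > 0"
    and a_ge: "AE t in lebesgue. t \<in> {0<..<1} \<longrightarrow> c \<le> a t"
  obtains q m where "q \<in> borel_measurable borel" and "m > 0"
    and "\<And>t. m \<le> q t \<and> q t \<le> 1 / c"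
    and "AE t in lebesgue. t \<in> {0<..<1} \<longrightarrow> q t = 1 / a t"
proof -
  obtain B where a_meas: "a \<in> borel_measurable (restrict_space lebesgue {0<..<1})"
    and a_le: "AE t in lebesgue. t \<in> {0<..<1} \<longrightarrow> norm (a t) \<le> B"
    using \<open>Linf01 a\<close> by (rule Linf01E)
  define M where "M = max B c"
  have "c \<le> M" by (simp add: M_def)
  obtain q where "q \<in> borel_measurable borel" and "\<And>t. 1 / M \<le> q t \<and> q t \<le> 1 / c"
    and "AE t in lebesgue. t \<in> {0<..<1} \<longrightarrow> q t = 1 / a t"
  proof (rule AE_bounded_borel_representative)
    show "(\<lambda>t. 1 / a t) \<in> borel_measurable (restrict_space lebesgue {0<..<1})"
      using a_meas by measurable
    show "AE t in lebesgue. t \<in> {0<..<1} \<longrightarrow> 1 / M \<le> 1 / a t \<and> 1 / a t \<le> 1 / c"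
      using a_ge a_le by eventually_elim
        (use \<open>c > 0\<close> in \<open>auto simp: M_def intro!: divide_left_mono mult_pos_pos\<close>)
  qed (use \<open>c > 0\<close> \<open>c \<le> M\<close> in \<open>auto intro: divide_left_mono\<close>)
  moreover have "1 / M > 0"
    using \<open>c > 0\<close> \<open>c \<le> M\<close> by simp
  ultimately show thesis
    using that by blast
qed

lemma weak_deriv01_indefinite_integral:
  fixes w :: "real \<Rightarrow> real"
  assumes w_meas: "w \<in> borel_measurable borel"
    and w_bound: "\<And>t. t \<in> {0..1} \<Longrightarrow> \<bar>w t\<bar> \<le> K"
  shows "weak_deriv01 (\<lambda>t. integral {0..t} w) w"
  unfolding weak_deriv01_def
proof (intro allI impI)
  fix \<phi> :: "real \<Rightarrow> real"
  assume "test_fun01 \<phi>"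
  then obtain D a b where D: "\<And>t. (\<phi> has_vector_derivative D t) (at t)"
    and D_cont: "continuous_on UNIV D"
    and "0 < a" "a \<le> b" "b < 1" and "\<And>t. t \<notin> {a..b} \<Longrightarrow> \<phi> t = 0"
    unfolding test_fun01_def C1_differentiable_on_def by blast
  then have \<phi>1: "\<phi> 1 = 0" by auto
  obtain KD where KD: "\<And>t. t \<in> {0..1} \<Longrightarrow> \<bar>D t\<bar> \<le> KD"
    using compact_imp_bounded[OF compact_continuous_image[OF
        continuous_on_subset[OF D_cont] compact_Icc]]
    unfolding bounded_iff by fastforce
  have D_meas: "D \<in> borel_measurable borel"
    using D_cont by (rule borel_measurable_continuous_onI)
  have FTC: "integral {s..1} D = - \<phi> s" if "s \<in> {0..1}" for s
  proof -
    have "(D has_integral \<phi> 1 - \<phi> s) {s..1}"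
      using that by (intro fundamental_theorem_of_calculus)
        (auto intro: has_vector_derivative_at_within D)
    then show ?thesis using \<phi>1 by (simp add: integral_unique)
  qed
  have "integral {0..1} (\<lambda>t. vector_derivative \<phi> (at t) *\<^sub>R integral {0..t} w)
      = integral {0..1} (\<lambda>t. D t * integral {0..t} w)"
    using vector_derivative_at[OF D] by simp
  also have "\<dots> = integral {0..1} (\<lambda>s. w s * integral {s..1} D)"
    by (rule integral_mult_indefinite_integral_swap[OF D_meas KD w_meas w_bound])
  also have "\<dots> = integral {0..1} (\<lambda>s. - (\<phi> s *\<^sub>R w s))"
    by (rule integral_cong) (simp add: FTC)
  finally show "integral {0..1} (\<lambda>t. vector_derivative \<phi> (at t) *\<^sub>R integral {0..t} w)
      = - integral {0..1} (\<lambda>t. \<phi> t *\<^sub>R w t)"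
    by simp
qed

lemma weak_deriv01_scaleR:
  fixes x v :: "real \<Rightarrow> real"
  assumes "weak_deriv01 x v"
  shows "weak_deriv01 (\<lambda>t. x t *\<^sub>R u) (\<lambda>t. v t *\<^sub>R u)"
  using assms unfolding weak_deriv01_def
  by (simp add: integral_scaleR_left_unconditional[where f="\<lambda>t. _ t * _ t"])

lemma W1inf01_scaleR:
  fixes x v :: "real \<Rightarrow> real"
  assumes "W1inf01 x v"
  shows "W1inf01 (\<lambda>t. x t *\<^sub>R u) (\<lambda>t. v t *\<^sub>R u)"
  using assms unfolding W1inf01_def
  by (auto intro: continuous_intros Linf01_scaleR weak_deriv01_scaleR)

lemma W1inf01_indefinite_integral:
  fixes w :: "real \<Rightarrow> real"
  assumes "w \<in> borel_measurable borel" and "\<And>t. t \<in> {0..1} \<Longrightarrow> \<bar>w t\<bar> \<le> K"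
  shows "W1inf01 (\<lambda>t. integral {0..t} w) w"
  unfolding W1inf01_def
proof (intro conjI)
  show "continuous_on {0..1} (\<lambda>t. integral {0..t} w)"
    using integrable_on_bounded_Icc[OF assms] by (rule indefinite_integral_continuous_1)
  show "Linf01 w"
    using assms by (intro Linf01_bounded_borel[where K=K]) auto
  show "weak_deriv01 (\<lambda>t. integral {0..t} w) w"
    using assms by (rule weak_deriv01_indefinite_integral)
qed

lemma zero_mean_combination_exists:
  fixes q r :: "real \<Rightarrow> real"
  assumes "q integrable_on {0..1}" and "r integrable_on {0..1}"
    and "\<And>t. t \<in> {0..1} \<Longrightarrow> m \<le> q t" and "m > 0"
  obtains k where "integral {0..1} (\<lambda>t. r t + k * q t) = 0"
proof
  have "integral {0..1} (\<lambda>_::real. m) \<le> integral {0..1} q"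
    using assms(1,3) by (intro integral_le) auto
  with \<open>m > 0\<close> have "integral {0..1} q \<noteq> 0"
    by simp
  define k where "k = - integral {0..1} r / integral {0..1} q"
  have "integral {0..1} (\<lambda>t. r t + k * q t) = integral {0..1} r + k * integral {0..1} q"
    using assms(1,2) by (simp add: integral_add integrable_on_mult_right)
  also have "\<dots> = 0"
    using \<open>integral {0..1} q \<noteq> 0\<close> by (simp add: k_def)
  finally show "integral {0..1} (\<lambda>t. r t + k * q t) = 0" .
qed

lemma weighted_equation_zero_mean_solution:
  fixes a g :: "real \<Rightarrow> real"
  assumes "Linf01 a" and "Linf01 g" and "c > 0"
    and a_ge: "AE t in lebesgue. t \<in> {0<..<1} \<longrightarrow> c \<le> a t"
  obtains w :: "real \<Rightarrow> real" and K k
  where "w \<in> borel_measurable borel" and "\<And>t. \<bar>w t\<bar> \<le> K"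
    and "integral {0..1} w = 0"
    and "AE t in lebesgue. t \<in> {0<..<1} \<longrightarrow> a t * w t - k = g t"
proof -
  obtain q m where q_meas: "q \<in> borel_measurable borel" and "m > 0"
    and q_bounds: "\<And>t. m \<le> q t \<and> q t \<le> 1 / c"
    and q_eq: "AE t in lebesgue. t \<in> {0<..<1} \<longrightarrow> q t = 1 / a t"
    using Linf01_reciprocal_representative[OF \<open>Linf01 a\<close> \<open>c > 0\<close> a_ge] by blast
  obtain r Kr where r_meas: "r \<in> borel_measurable borel" and r_bound: "\<And>t. \<bar>r t\<bar> \<le> Kr"
    and r_eq: "AE t in lebesgue. t \<in> {0<..<1} \<longrightarrow> r t = g t / a t"
    using Linf01_bounded_representative[OF
        Linf01_divide[OF \<open>Linf01 g\<close> \<open>Linf01 a\<close> \<open>c > 0\<close> a_ge]]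
    by blast
  have q_abs: "\<bar>q t\<bar> \<le> 1 / c" for t
    using q_bounds[of t] \<open>m > 0\<close> by linarith
  obtain k where mean_0: "integral {0..1} (\<lambda>t. r t + k * q t) = 0"
    using zero_mean_combination_exists[OF integrable_on_bounded_Icc integrable_on_bounded_Icc]
      q_meas q_abs r_meas r_bound q_bounds \<open>m > 0\<close> by blast
  show ?thesis
  proof
    show "(\<lambda>t. r t + k * q t) \<in> borel_measurable borel"
      using q_meas r_meas by measurable
    show "\<bar>r t + k * q t\<bar> \<le> Kr + \<bar>k\<bar> * (1 / c)" for t
    proof -
      have "\<bar>k * q t\<bar> \<le> \<bar>k\<bar> * (1 / c)"
        unfolding abs_mult using q_abs[of t] by (rule mult_left_mono) simp
      then show ?thesis
        using abs_triangle_ineq[of "r t" "k * q t"] r_bound[of t] by linarith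
    qed
    show "integral {0..1} (\<lambda>t. r t + k * q t) = 0"
      by (fact mean_0)
    show "AE t in lebesgue. t \<in> {0<..<1} \<longrightarrow> a t * (r t + k * q t) - k = g t"
      using a_ge q_eq r_eq
      by eventually_elim (use \<open>c > 0\<close> in \<open>auto simp: field_simps\<close>)
  qed
qed

theorem theorem2:
  fixes L c :: real and \<xi> \<xi>' :: "real \<Rightarrow> real^2" and u xO xD :: "real^2"
  assumes "W1inf01 \<xi> \<xi>'" and "\<xi> 0 = xO" and "\<xi> 1 = xD"
    and "L > 0" and "c > 0"
    and "AE t in lebesgue. t \<in> {0<..<1} \<longrightarrow> \<xi>' t \<bullet> u \<ge> c"
  shows "\<forall>g :: real \<Rightarrow> real. Linf01 g \<longrightarrow>
           (\<exists>dL :: real. \<exists>d\<xi> d\<xi>' :: real \<Rightarrow> real^2.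
              W1inf01 d\<xi> d\<xi>' \<and> d\<xi> 0 = 0 \<and> d\<xi> 1 = 0 \<and>
              (AE t in lebesgue. t \<in> {0<..<1} \<longrightarrow> h_deriv L \<xi>' dL d\<xi>' t = g t))"
proof (intro allI impI)
  fix g :: "real \<Rightarrow> real"
  assume "Linf01 g"
  have "Linf01 (\<lambda>t. \<xi>' t \<bullet> u)"
    using assms(1) unfolding W1inf01_def by (blast intro: Linf01_inner_right)
  then obtain w K k where w_meas: "w \<in> borel_measurable borel"
    and w_bound: "\<And>t. \<bar>w t\<bar> \<le> K" and mean_0: "integral {0..1} w = 0"
    and solves: "AE t in lebesgue. t \<in> {0<..<1} \<longrightarrow> (\<xi>' t \<bullet> u) * w t - k = g t"
    using weighted_equation_zero_mean_solution[OF _ \<open>Linf01 g\<close> \<open>c > 0\<close> assms(6)] by blast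
  define d\<xi> where "d\<xi> t = integral {0..t} w *\<^sub>R (u /\<^sub>R 2)" for t
  have "W1inf01 d\<xi> (\<lambda>t. w t *\<^sub>R (u /\<^sub>R 2))"
    unfolding d\<xi>_def using w_meas w_bound
    by (intro W1inf01_scaleR W1inf01_indefinite_integral)
  moreover have "d\<xi> 0 = 0" and "d\<xi> 1 = 0"
    using mean_0 by (simp_all add: d\<xi>_def)
  moreover have "AE t in lebesgue. t \<in> {0<..<1} \<longrightarrow>
      h_deriv L \<xi>' (k / (2 * L)) (\<lambda>t. w t *\<^sub>R (u /\<^sub>R 2)) t = g t"
    using solves
    by eventually_elim (use \<open>L > 0\<close> in \<open>simp add: h_deriv_def algebra_simps\<close>)
  ultimately show "\<exists>dL d\<xi> d\<xi>'. W1inf01 d\<xi> d\<xi>' \<and> d\<xi> 0 = 0 \<and> d\<xi> 1 = 0 \<and>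
      (AE t in lebesgue. t \<in> {0<..<1} \<longrightarrow> h_deriv L \<xi>' dL d\<xi>' t = g t)"
    by blast
qed

end
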